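(* Let $n \geq k \geq 1$ and let $Z_1,\ldots,Z_k$ be subsets of $[n]$ with $|Z_i| = k-1$ for every $i\in[k]$. Let $\alpha_1,\ldots,\alpha_n$ be indeterminates and, for $i\in[k]$, let $f_i(x)=\prod_{j\in Z_i}(x-\alpha_j)=\sum_{j=1}^{k} a_{i,j}x^{j-1}$, where each $a_{i,j}$ is a polynomial in $\alpha_1,\ldots,\alpha_n$ with integer coefficients. Let $\mathbf{A}=(a_{i,j})_{i,j\in[k]}$ and \[ F(\alpha_1,\ldots,\alpha_n)=\det(\mathbf{A})\prod_{1\le j<i\le n}(\alpha_i-\alpha_j). \] Then for every $t\in[n]$, the degree of $F$ in the variable $\alpha_t$ is at most $n+k-2$.
   Context: $[n]=\{1,\ldots,n\}$. *)

theory Defs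
  imports "HOL-Library.Poly_Mapping" "HOL-Computational_Algebra.Polynomial" "Jordan_Normal_Form.Determinant"
begin

text \<open>Multivariate polynomials with integer coefficients in the indeterminates
  alpha_1, alpha_2, ... : finitely supported maps from monomials (exponent vectors
  nat =>0 nat) to integer coefficients.\<close>
type_synonym mpoly = "(nat \<Rightarrow>\<^sub>0 nat) \<Rightarrow>\<^sub>0 int"

definition Var :: "nat \<Rightarrow> mpoly" where
  "Var j = Poly_Mapping.single (Poly_Mapping.single j 1) 1"

text \<open>Degree of a multivariate polynomial in the variable alpha_t
  (degree of the zero polynomial taken to be 0).\<close>
definition degree_in :: "nat \<Rightarrow> mpoly \<Rightarrow> nat" where
  "degree_in t p = Max (insert 0 ((\<lambda>m. Poly_Mapping.lookup m t) ` Poly_Mapping.keys p))"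

end

theory Submission imports Defs begin

text \<open>The Vandermonde product has degree n - 1 in each variable, so it suffices to bound the
  degree of det A in alpha_t by k - 1. Each entry of A is a coefficient of a product of
  linear factors and therefore has degree at most 1 in alpha_t, and degree 0 in every row
  i with t \<notin> Z_i; expanding the determinant gives the bound whenever some Z_i misses t.
  If instead t lies in every Z_i, then alpha_t is a common root of all f_i, i.e. A
  annihilates the vector (1, alpha_t, ..., alpha_t^(k-1)) whose first entry is 1, and
  then det A = 0.\<close>

lemma degree_in_le_iff:
  "degree_in t p \<le> d \<longleftrightarrow> (\<forall>m\<in>Poly_Mapping.keys p. Poly_Mapping.lookup m t \<le> d)"
  unfolding degree_in_def by (simp add: Max_le_iff)

lemma degree_in_zero [simp]: "degree_in t 0 = 0"
  unfolding degree_in_def by simp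

lemma degree_in_one [simp]: "degree_in t 1 = 0"
  unfolding degree_in_def by simp

lemma degree_in_uminus [simp]: "degree_in t (- p) = degree_in t p"
  unfolding degree_in_def by simp

lemma degree_in_Var_le: "degree_in t (Var j) \<le> (if j = t then 1 else 0)"
  unfolding degree_in_le_iff Var_def by (auto simp: lookup_single)

lemma degree_in_add_le:
  assumes "degree_in t p \<le> d" and "degree_in t q \<le> d"
  shows "degree_in t (p + q) \<le> d"
  using assms keys_add[of p q] unfolding degree_in_le_iff by blast

lemma degree_in_diff_le:
  assumes "degree_in t p \<le> d" and "degree_in t q \<le> d"
  shows "degree_in t (p - q) \<le> d"
  using degree_in_add_le[of t p d "- q"] assms by simp

lemma degree_in_mult_le:
  assumes "degree_in t p \<le> a" and "degree_in t q \<le> b"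
  shows "degree_in t (p * q) \<le> a + b"
  unfolding degree_in_le_iff
proof
  fix m assume "m \<in> Poly_Mapping.keys (p * q)"
  then obtain x y where "m = x + y" "x \<in> Poly_Mapping.keys p" "y \<in> Poly_Mapping.keys q"
    using keys_mult by blast
  then show "Poly_Mapping.lookup m t \<le> a + b"
    using assms by (simp add: degree_in_le_iff lookup_add add_mono)
qed

lemma degree_in_sum_le:
  "(\<And>i. i \<in> S \<Longrightarrow> degree_in t (g i) \<le> d) \<Longrightarrow> degree_in t (sum g S) \<le> d"
  by (induction S rule: infinite_finite_induct) (auto intro: degree_in_add_le)

lemma degree_in_prod_le:
  "(\<And>i. i \<in> S \<Longrightarrow> degree_in t (g i) \<le> d i) \<Longrightarrow> degree_in t (prod g S) \<le> sum d S"
  by (induction S rule: infinite_finite_induct) (auto intro: degree_in_mult_le)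

lemma degree_in_signof_mult: "degree_in t (signof p * q) = degree_in t q"
proof -
  have "(signof p :: mpoly) \<in> {1, -1}" by (rule signof_pm_one)
  then have "signof p * q = q \<or> signof p * q = - q" by auto
  then show ?thesis by auto
qed

lemma degree_in_coeff_prod_linear_factors:
  assumes "finite S"
  shows "degree_in t (coeff (\<Prod>j\<in>S. [:- Var j, 1:]) i) \<le> card (S \<inter> {t})"
  using assms
proof (induction S arbitrary: i rule: finite_induct)
  case empty
  then show ?case by (cases i) auto
next
  case (insert j S)
  let ?q = "\<Prod>j\<in>S. [:- Var j, 1:]"
  have coeff_step: "coeff ([:- Var j, 1:] * ?q) i
      = - Var j * coeff ?q i + (case i of 0 \<Rightarrow> 0 | Suc i' \<Rightarrow> coeff ?q i')"
    by (simp add: mult_pCons_left coeff_pCons split: nat.splits)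
  have card_step: "card (insert j S \<inter> {t}) = (if j = t then 1 else 0) + card (S \<inter> {t})"
    using insert by auto
  have "degree_in t (- Var j * coeff ?q i) \<le> card (insert j S \<inter> {t})"
    unfolding card_step by (rule degree_in_mult_le) (use degree_in_Var_le insert.IH in auto)
  moreover have "degree_in t (case i of 0 \<Rightarrow> 0 | Suc i' \<Rightarrow> coeff ?q i') \<le> card (insert j S \<inter> {t})"
    using insert.IH[of "i - 1"] card_step by (cases i) auto
  ultimately show ?case
    unfolding prod.insert[OF insert(1,2)] coeff_step by (rule degree_in_add_le)
qed

lemma degree_in_vandermonde_le:
  assumes "t \<in> {1..n}"
  shows "degree_in t (\<Prod>i\<in>{1..n}. \<Prod>j\<in>{1..<i}. (Var i - Var j)) \<le> n - 1"
proof -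
  have "degree_in t (\<Prod>i\<in>{1..n}. \<Prod>j\<in>{1..<i}. (Var i - Var j))
      \<le> (\<Sum>i\<in>{1..n}. \<Sum>j\<in>{1..<i}. (if i = t then 1 else 0) + (if j = t then 1 else 0))"
    by (intro degree_in_prod_le degree_in_diff_le; rule order_trans[OF degree_in_Var_le]; simp)
  also have "\<dots> = (\<Sum>i\<in>{1..n}. (if i = t then i - 1 else 0) + (if t < i then 1 else 0))"
    using assms by (intro sum.cong) (auto simp: sum.distrib)
  also have "\<dots> = (t - 1) + card {t<..n}"
  proof -
    have "{Suc 0..n} \<inter> Collect ((<) t) = {t<..n}" using assms by auto
    then show ?thesis using assms by (simp add: sum.distrib sum.If_cases)
  qed
  also have "\<dots> = n - 1" using assms by simp
  finally show ?thesis .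
qed

lemma degree_in_det_le:
  assumes "A \<in> carrier_mat k k"
    and "\<And>i j. i < k \<Longrightarrow> j < k \<Longrightarrow> degree_in t (A $$ (i, j)) \<le> d i"
  shows "degree_in t (det A) \<le> (\<Sum>i<k. d i)"
  unfolding det_def'[OF assms(1)] lessThan_atLeast0
proof (intro degree_in_sum_le, unfold degree_in_signof_mult, intro degree_in_prod_le)
  fix p i assume "p \<in> {p. p permutes {0..<k}}" and "i \<in> {0..<k}"
  then show "degree_in t (A $$ (i, p i)) \<le> d i"
    using assms(2) permutes_in_image by fastforce
qed

lemma det_eq_0_if_col_zero:
  assumes "A \<in> carrier_mat k k" and "c < k" and "\<And>i. i < k \<Longrightarrow> A $$ (i, c) = 0"
  shows "det A = 0"
  unfolding det_col[OF assms(1)]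
proof (rule sum.neutral, intro ballI)
  fix p assume "p \<in> {p. p permutes {0..<k}}"
  then have "p c < k" using assms(2) permutes_in_image by fastforce
  then have "(\<Prod>j<k. A $$ (p j, j)) = 0"
    using assms(2,3) by (intro prod_zero) auto
  then show "signof p * (\<Prod>j<k. A $$ (p j, j)) = 0" by simp
qed

text \<open>Right multiplication by the unimodular matrix that agrees with the identity except
  for its first column (1, x, ..., x^(k-1)) makes the first column of A zero.\<close>

lemma det_eq_0_if_rows_vanish_at:
  fixes A :: "'a :: comm_ring_1 mat"
  assumes A: "A \<in> carrier_mat k k" and "0 < k"
    and vanish: "\<And>i. i < k \<Longrightarrow> (\<Sum>j<k. A $$ (i, j) * x ^ j) = 0"
  shows "det A = 0"
proof -
  define M :: "'a mat" where
    "M = mat k k (\<lambda>(i, j). if j = 0 then x ^ i else if i = j then 1 else 0)"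
  have M: "M \<in> carrier_mat k k" unfolding M_def by simp
  have "det M = prod_list (diag_mat M)"
    by (rule det_lower_triangular[OF _ M]) (simp add: M_def)
  also have "diag_mat M = replicate k 1"
    by (rule nth_equalityI) (auto simp: diag_mat_def M_def)
  finally have "det M = 1" by simp
  moreover have "det (A * M) = 0"
  proof (rule det_eq_0_if_col_zero)
    fix i assume "i < k"
    then show "(A * M) $$ (i, 0) = 0"
      using vanish[of i] A M \<open>0 < k\<close> by (simp add: scalar_prod_def M_def lessThan_atLeast0)
  qed (use A M \<open>0 < k\<close> in auto)
  ultimately show ?thesis using det_mult[OF A M] by simp
qed

lemma poly_eq_sum_coeff_lessThan:
  fixes p :: "'a :: comm_semiring_1 poly"
  assumes "degree p < k"
  shows "poly p x = (\<Sum>j<k. coeff p j * x ^ j)"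
proof -
  have "poly p x = (\<Sum>j\<le>degree p. coeff p j * x ^ j)" by (rule poly_altdef)
  also have "\<dots> = (\<Sum>j<k. coeff p j * x ^ j)"
    by (rule sum.mono_neutral_left) (use assms in \<open>auto simp: coeff_eq_0\<close>)
  finally show ?thesis .
qed

lemma degree_in_det_coeff_mat_le:
  assumes "0 < k" and Z: "\<And>i. i < k \<Longrightarrow> finite (Z i) \<and> card (Z i) = k - 1"
  shows "degree_in t (det (mat k k (\<lambda>(i, j). coeff (\<Prod>l\<in>Z i. [:- Var l, 1:]) j))) \<le> k - 1"
    (is "degree_in t (det ?A) \<le> _")
proof (cases "\<exists>i0<k. t \<notin> Z i0")
  case True
  then obtain i0 where i0: "i0 < k" "t \<notin> Z i0" by blast
  have "degree_in t (det ?A) \<le> (\<Sum>i<k. if i = i0 then 0 else 1)"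
  proof (rule degree_in_det_le)
    fix i j assume "i < k" "j < k"
    then have "degree_in t (?A $$ (i, j)) \<le> card (Z i \<inter> {t})"
      using Z degree_in_coeff_prod_linear_factors by simp
    moreover have "card (Z i \<inter> {t}) \<le> 1"
      using card_mono[of "{t}" "Z i \<inter> {t}"] by simp
    ultimately show "degree_in t (?A $$ (i, j)) \<le> (if i = i0 then 0 else 1)"
      using i0 by auto
  qed simp
  also have "\<dots> = k - 1"
    using i0 by (simp add: sum.If_cases Diff_eq[symmetric])
  finally show ?thesis .
next
  case False
  have "det ?A = 0"
  proof (rule det_eq_0_if_rows_vanish_at[where x = "Var t"])
    fix i assume i: "i < k"
    have "degree (\<Prod>l\<in>Z i. [:- Var l, 1:]) \<le> card (Z i)"
      using degree_prod_sum_le[of "Z i" "\<lambda>l. [:- Var l, 1:]"] Z[OF i] by simp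
    then have "(\<Sum>j<k. ?A $$ (i, j) * Var t ^ j) = poly (\<Prod>l\<in>Z i. [:- Var l, 1:]) (Var t)"
      using i Z[OF i] \<open>0 < k\<close> by (simp add: poly_eq_sum_coeff_lessThan[of _ k])
    also have "\<dots> = 0"
      unfolding poly_prod using Z i False by (intro prod_zero) auto
    finally show "(\<Sum>j<k. ?A $$ (i, j) * Var t ^ j) = 0" .
  qed (use \<open>0 < k\<close> in auto)
  then show ?thesis by simp
qed

theorem lemma1:
  fixes n k :: nat and Z :: "nat \<Rightarrow> nat set"
    and f :: "nat \<Rightarrow> mpoly poly" and A :: "mpoly mat" and F :: mpoly
  assumes "1 \<le> k" and "k \<le> n"
    and "\<forall>i\<in>{1..k}. Z i \<subseteq> {1..n} \<and> card (Z i) = k - 1"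
  defines "f \<equiv> \<lambda>i. \<Prod>j\<in>Z i. [:- Var j, 1:]"
    and "A \<equiv> mat k k (\<lambda>(i, j). coeff (f (i + 1)) j)"
    and "F \<equiv> det A * (\<Prod>i\<in>{1..n}. \<Prod>j\<in>{1..<i}. (Var i - Var j))"
  shows "\<forall>t\<in>{1..n}. degree_in t F \<le> n + k - 2"
proof
  fix t assume t: "t \<in> {1..n}"
  have Z: "finite (Z (i + 1)) \<and> card (Z (i + 1)) = k - 1" if "i < k" for i
    using assms(3) that finite_subset[of "Z (i + 1)" "{1..n}"] by auto
  have "degree_in t (det A) \<le> k - 1"
    unfolding A_def f_def using degree_in_det_coeff_mat_le[of k "\<lambda>i. Z (i + 1)"] Z assms(1)
    by simp
  then have "degree_in t F \<le> (k - 1) + (n - 1)"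
    unfolding F_def by (rule degree_in_mult_le[OF _ degree_in_vandermonde_le[OF t]])
  then show "degree_in t F \<le> n + k - 2" using assms(1,2) by linarith
qed

end
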